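(* Let $(\Gamma,M)$ be an E-GCM graph with Coxeter group $W$ acting on $V$ by the quasi-standard geometric representation. Fix $i\ne j$ in $I_n$ and a positive integer $k$. If $m_{ij}=\infty$, then $(s_is_j)^k.\alpha_i=a\alpha_i+b\alpha_j$ and $s_j(s_is_j)^k.\alpha_i=c\alpha_i+d\alpha_j$ with $a,b,c,d>0$. Now suppose $m_{ij}<\infty$. If $2k<m_{ij}$, then $(s_is_j)^k.\alpha_i=a\alpha_i+b\alpha_j$ with $a\ge0$, $b>0$; moreover this is a multiple of $\alpha_j$ if and only if $m_{ij}$ is odd and $k=(m_{ij}-1)/2$, in which case $(s_is_j)^k.\alpha_i=\frac{-M_{ji}}{2\cos(\pi/m_{ij})}\alpha_j$. If $2k<m_{ij}-1$, then $s_j(s_is_j)^k.\alpha_i=a\alpha_i+b\alpha_j$ with $a>0$, $b\ge0$; moreover this is a multiple of $\alpha_i$ if and only if $m_{ij}$ is even and $k=(m_{ij}-2)/2$, in which case $s_j(s_is_j)^k.\alpha_i=\alpha_i$.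
   Context: E-GCM $M=(M_{ij})_{i,j\in I_n}$: real, $M_{ii}=2$, $M_{ij}\le0$ ($i\ne j$), $M_{ij}\ne0\iff M_{ji}\ne0$, nonzero $M_{ij}M_{ji}$ either $\ge4$ or $=4\cos^2(\pi/m)$ with $m\ge3$ integer. $W$: generators $s_i$, $s_i^2=e$, $(s_is_j)^{m_{ij}}=e$, where $m_{ij}=k$ if $M_{ij}M_{ji}=4\cos^2(\pi/k)$ for an integer $k\ge2$ (so $m_{ij}=2$ iff $M_{ij}M_{ji}=0$) and $m_{ij}=\infty$ if $M_{ij}M_{ji}\ge4$. Quasi-standard geometric representation: $V$ real vector space with basis $(\alpha_i)$, $s_i.v=v-2B(\alpha_i,v)\alpha_i$ with $B(\alpha_i,\alpha_j)=\tfrac12M_{ij}$, i.e. $s_i.\alpha_j=\alpha_j-M_{ij}\alpha_i$. *)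

theory Defs
  imports Complex_Main "HOL-Library.Extended_Nat"
begin

definition egcm :: "('i::finite \<Rightarrow> 'i \<Rightarrow> real) \<Rightarrow> bool" where
  "egcm M \<longleftrightarrow>
     (\<forall>i. M i i = 2) \<and>
     (\<forall>i j. i \<noteq> j \<longrightarrow> M i j \<le> 0) \<and>
     (\<forall>i j. M i j \<noteq> 0 \<longleftrightarrow> M j i \<noteq> 0) \<and>
     (\<forall>i j. M i j * M j i \<noteq> 0 \<longrightarrow>
        (M i j * M j i \<ge> 4 \<or>
         (\<exists>m::nat. m \<ge> 3 \<and> M i j * M j i = 4 * (cos (pi / real m))\<^sup>2)))"

definition coxm :: "('i \<Rightarrow> 'i \<Rightarrow> real) \<Rightarrow> 'i \<Rightarrow> 'i \<Rightarrow> enat" where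
  "coxm M i j =
     (if M i j * M j i \<ge> 4 then \<infinity>
      else enat (LEAST k::nat. k \<ge> 2 \<and> M i j * M j i = 4 * (cos (pi / real k))\<^sup>2))"

text \<open>V = real vector space with basis (alpha_i); vectors are coordinate
functions 'i => real, and alpha i is the i-th basis vector.\<close>

definition alpha :: "'i \<Rightarrow> ('i \<Rightarrow> real)" where
  "alpha i = (\<lambda>l. if l = i then 1 else 0)"

text \<open>Quasi-standard geometric representation: s_i.v = v - 2B(alpha_i,v) alpha_i,
with B(alpha_i,alpha_j) = M_ij/2, i.e. s_i.alpha_j = alpha_j - M_ij alpha_i.\<close>

definition refl :: "('i::finite \<Rightarrow> 'i \<Rightarrow> real) \<Rightarrow> 'i \<Rightarrow> ('i \<Rightarrow> real) \<Rightarrow> ('i \<Rightarrow> real)" where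
  "refl M i v = (\<lambda>l. v l - (\<Sum>h\<in>UNIV. M i h * v h) * alpha i l)"

end

theory Submission
  imports Defs
begin

text \<open>On the plane spanned by alpha i and alpha j put t = sqrt (M i j * M j i) / 2 and rescale
  alpha j by lam = - M j i / (2 t).  In the basis (alpha i, lam alpha j) both reflections add 2 t
  times the other basis vector, as for a symmetric Cartan matrix, so the coefficients of
  (s_i s_j)^k alpha i satisfy the Chebyshev recursion u(n+2) = 2 t u(n+1) - u(n).  If m_ij is
  infinite then t >= 1 and these coefficients grow at least linearly, hence stay positive.  If
  m_ij = m is finite then t = cos (pi / m), the coefficients are sin (n pi / m) / sin (pi / m),
  positive for 0 < n < m, equal to 1 at n = m - 1 and to 0 at n = m; this decides when the
  orbit vector is a multiple of a single root.\<close>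

lemma sum_mult_alpha: "(\<Sum>h\<in>UNIV. f h * alpha (i::'i::finite) h) = (f i :: real)"
  by (simp add: alpha_def if_distrib[of "\<lambda>x. _ * x"] cong: if_cong)

lemma refl_two_roots:
  "refl M h (\<lambda>l. a * alpha i l + b * alpha j l)
     = (\<lambda>l. a * alpha i l + b * alpha j l - (a * M h i + b * M h j) * alpha h l)"
proof -
  have "(\<Sum>l\<in>UNIV. M h l * (a * alpha i l + b * alpha j l))
      = (\<Sum>l\<in>UNIV. (a * M h l) * alpha i l) + (\<Sum>l\<in>UNIV. (b * M h l) * alpha j l)"
    by (simp add: sum.distrib algebra_simps)
  then show ?thesis
    by (simp add: refl_def sum_mult_alpha)
qed

lemma two_roots_multiple_of_second_iff:
  assumes "i \<noteq> j"
  shows "(\<exists>c. (\<lambda>l. a * alpha i l + b * alpha j l) = (\<lambda>l. c * alpha j l)) \<longleftrightarrow> a = 0"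
  using assms by (auto simp: alpha_def fun_eq_iff dest: spec[of _ i])

lemma two_roots_multiple_of_first_iff:
  assumes "i \<noteq> j"
  shows "(\<exists>c. (\<lambda>l. a * alpha i l + b * alpha j l) = (\<lambda>l. c * alpha i l)) \<longleftrightarrow> b = 0"
  using assms by (auto simp: alpha_def fun_eq_iff dest: spec[of _ j])

text \<open>chebU t n is U (n - 1) at t, the Chebyshev polynomial of the second kind with its index
  shifted by one.\<close>

fun chebU :: "real \<Rightarrow> nat \<Rightarrow> real" where
  "chebU t 0 = 0"
| "chebU t (Suc 0) = 1"
| "chebU t (Suc (Suc n)) = 2 * t * chebU t (Suc n) - chebU t n"

lemma chebU_ge_index:
  assumes "1 \<le> t"
  shows "real n \<le> chebU t n"
proof -
  have "real n \<le> chebU t n \<and> 1 \<le> chebU t (Suc n) - chebU t n" for n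
  proof (induction n)
    case (Suc n)
    then have "0 \<le> chebU t (Suc n)"
      by linarith
    then have "2 * chebU t (Suc n) \<le> 2 * t * chebU t (Suc n)"
      using assms by (intro mult_right_mono) auto
    then have "1 \<le> chebU t (Suc (Suc n)) - chebU t (Suc n)"
      using Suc by (simp only: chebU.simps) linarith
    with Suc show ?case by simp
  qed simp
  then show ?thesis by blast
qed

lemma chebU_cos:
  assumes "sin x \<noteq> 0"
  shows "chebU (cos x) n = sin (real n * x) / sin x"
proof (induction "cos x" n rule: chebU.induct)
  case (3 n)
  have "sin ((real n + 2) * x) = 2 * cos x * sin ((real n + 1) * x) - sin (real n * x)"
    using sin_add[of "(real n + 1) * x" x] sin_diff[of "(real n + 1) * x" x]
    by (simp add: algebra_simps)
  with 3 assms show ?case by (simp add: field_simps add_ac)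
qed (use assms in simp_all)

lemma sin_pi_div_pos:
  assumes "2 \<le> m"
  shows "0 < sin (pi / real m)"
  using assms by (intro sin_gt_zero) (auto simp: field_simps)

lemma chebU_cos_pi_div:
  assumes "2 \<le> m"
  shows "chebU (cos (pi / real m)) n = sin (real n * pi / real m) / sin (pi / real m)"
  using sin_pi_div_pos[OF assms] by (simp add: chebU_cos)

lemma chebU_cos_pi_div_pos:
  assumes "2 \<le> m" "0 < n" "n < m"
  shows "0 < chebU (cos (pi / real m)) n"
proof -
  have "0 < sin (real n * pi / real m)"
    using assms by (intro sin_gt_zero) (auto simp: field_simps)
  then show ?thesis
    using assms(1) sin_pi_div_pos[OF assms(1)] by (simp add: chebU_cos_pi_div)
qed

lemma chebU_cos_pi_div_self:
  assumes "2 \<le> m"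
  shows "chebU (cos (pi / real m)) m = 0"
  using assms by (simp add: chebU_cos_pi_div)

lemma chebU_cos_pi_div_pred:
  assumes "2 \<le> m"
  shows "chebU (cos (pi / real m)) (m - 1) = 1"
proof -
  have "real (m - 1) * pi / real m = pi - pi / real m"
    using assms by (simp add: of_nat_diff field_simps)
  with assms sin_pi_div_pos[OF assms] show ?thesis by (simp add: chebU_cos_pi_div)
qed

lemma chebU_cos_pi_div_nonneg:
  assumes "2 \<le> m" "n \<le> m"
  shows "0 \<le> chebU (cos (pi / real m)) n"
  using assms chebU_cos_pi_div_pos[of m n] chebU_cos_pi_div_self[of m]
  by (cases "n = 0 \<or> n = m") (auto simp: less_eq_real_def)

lemma chebU_cos_pi_div_eq_0_iff:
  assumes "2 \<le> m" "0 < n" "n \<le> m"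
  shows "chebU (cos (pi / real m)) n = 0 \<longleftrightarrow> n = m"
  using assms chebU_cos_pi_div_pos[of m n] chebU_cos_pi_div_self[of m] by fastforce

lemma refl_advances_alpha_j_coeff:
  assumes "M j j = 2" "- M j i = 2 * t * lam"
  shows "refl M j (\<lambda>l. chebU t (n + 1) * alpha i l + lam * chebU t n * alpha j l)
       = (\<lambda>l. chebU t (n + 1) * alpha i l + lam * chebU t (n + 2) * alpha j l)"
proof -
  have "M j i = - (2 * t * lam)"
    using assms(2) by simp
  then have coeff: "chebU t (n + 1) * M j i + lam * chebU t n * M j j
      = lam * chebU t n - lam * chebU t (n + 2)"
    using assms(1) by (simp add: eval_nat_numeral algebra_simps)
  show ?thesis
    unfolding refl_two_roots coeff by (simp add: algebra_simps)
qed

lemma refl_advances_alpha_i_coeff: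
  assumes "M i i = 2" "- M i j * lam = 2 * t"
  shows "refl M i (\<lambda>l. chebU t (n + 1) * alpha i l + lam * chebU t (n + 2) * alpha j l)
       = (\<lambda>l. chebU t (n + 3) * alpha i l + lam * chebU t (n + 2) * alpha j l)"
proof -
  have "M i j * lam = - (2 * t)"
    using assms(2) by simp
  then have "lam * chebU t (n + 2) * M i j = - (2 * t) * chebU t (n + 2)"
    by (metis mult.commute mult.left_commute)
  then have coeff: "chebU t (n + 1) * M i i + lam * chebU t (n + 2) * M i j
      = chebU t (n + 1) - chebU t (n + 3)"
    using assms(1) by (simp add: eval_nat_numeral algebra_simps)
  show ?thesis
    unfolding refl_two_roots coeff by (simp add: algebra_simps)
qed

lemma rotation_power_alpha:
  assumes "M i i = 2" "M j j = 2" "- M i j * lam = 2 * t" "- M j i = 2 * t * lam"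
  shows "((refl M i \<circ> refl M j) ^^ k) (alpha i)
       = (\<lambda>l. chebU t (2 * k + 1) * alpha i l + lam * chebU t (2 * k) * alpha j l)"
proof (induction k)
  case 0
  show ?case by simp
next
  case (Suc k)
  have idx: "2 * Suc k = 2 * k + 2" "2 * k + 2 + 1 = 2 * k + 3"
    by simp_all
  have "((refl M i \<circ> refl M j) ^^ Suc k) (alpha i)
      = refl M i (refl M j (\<lambda>l. chebU t (2 * k + 1) * alpha i l + lam * chebU t (2 * k) * alpha j l))"
    by (simp only: funpow.simps(2) comp_apply Suc.IH)
  also have "\<dots> = (\<lambda>l. chebU t (2 * k + 3) * alpha i l + lam * chebU t (2 * k + 2) * alpha j l)"
    unfolding refl_advances_alpha_j_coeff[where M = M and i = i and j = j, OF assms(2,4)]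
      refl_advances_alpha_i_coeff[where M = M and i = i and j = j, OF assms(1,3)] ..
  finally show ?case
    unfolding idx .
qed

lemma refl_rotation_power_alpha:
  assumes "M i i = 2" "M j j = 2" "- M i j * lam = 2 * t" "- M j i = 2 * t * lam"
  shows "refl M j (((refl M i \<circ> refl M j) ^^ k) (alpha i))
       = (\<lambda>l. chebU t (2 * k + 1) * alpha i l + lam * chebU t (2 * k + 2) * alpha j l)"
  unfolding rotation_power_alpha[OF assms]
    refl_advances_alpha_j_coeff[where M = M and i = i and j = j, OF assms(2,4)] ..

lemma symmetrizing_scale:
  fixes b c t :: real
  assumes "b * c = 4 * t\<^sup>2" "t \<noteq> 0"
  shows "- b * (- c / (2 * t)) = 2 * t" and "- c = 2 * t * (- c / (2 * t))"
proof -
  have "- b * (- c / (2 * t)) = b * c / (2 * t)"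
    by simp
  also have "\<dots> = 2 * t"
    using assms by (simp add: power2_eq_square)
  finally show "- b * (- c / (2 * t)) = 2 * t" .
  show "- c = 2 * t * (- c / (2 * t))"
    using assms(2) by simp
qed

lemma egcmD:
  assumes "egcm M"
  shows "M i i = 2"
    and "i \<noteq> j \<Longrightarrow> M i j \<le> 0"
    and "M i j * M j i \<noteq> 0 \<Longrightarrow>
           4 \<le> M i j * M j i \<or> (\<exists>m::nat. 3 \<le> m \<and> M i j * M j i = 4 * (cos (pi / real m))\<^sup>2)"
  using assms unfolding egcm_def by blast+

lemma coxm_eq_infinity_iff: "coxm M i j = \<infinity> \<longleftrightarrow> 4 \<le> M i j * M j i"
  by (simp add: coxm_def)

lemma coxm_eq_enat_cos:
  assumes "egcm M" "coxm M i j = enat m"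
  shows "2 \<le> m" and "M i j * M j i = 4 * (cos (pi / real m))\<^sup>2"
proof -
  let ?P = "\<lambda>k::nat. 2 \<le> k \<and> M i j * M j i = 4 * (cos (pi / real k))\<^sup>2"
  have m: "m = (LEAST k. ?P k)" and not_inf: "\<not> 4 \<le> M i j * M j i"
    using assms(2) by (auto simp: coxm_def split: if_splits)
  have "\<exists>k. ?P k"
  proof (cases "M i j * M j i = 0")
    case True
    then have "?P 2"
      by simp
    then show ?thesis ..
  next
    case False
    from egcmD(3)[OF assms(1) False] not_inf obtain k :: nat
      where "3 \<le> k" "M i j * M j i = 4 * (cos (pi / real k))\<^sup>2"
      by blast
    then have "?P k"
      by simp
    then show ?thesis ..
  qed
  then have "?P m"
    unfolding m by (rule LeastI_ex)
  then show "2 \<le> m" and "M i j * M j i = 4 * (cos (pi / real m))\<^sup>2"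
    by blast+
qed

lemma rotation_orbit_infinite_order:
  assumes "M i i = 2" "M j j = 2" "M j i \<le> 0" "4 \<le> M i j * M j i" "1 \<le> k"
  shows "\<exists>a b. a > 0 \<and> b > 0 \<and>
           ((refl M i \<circ> refl M j) ^^ k) (alpha i) = (\<lambda>l. a * alpha i l + b * alpha j l)"
    and "\<exists>c d. c > 0 \<and> d > 0 \<and>
           refl M j (((refl M i \<circ> refl M j) ^^ k) (alpha i)) = (\<lambda>l. c * alpha i l + d * alpha j l)"
proof -
  define t where "t = sqrt (M i j * M j i) / 2"
  have t: "1 \<le> t" "M i j * M j i = 4 * t\<^sup>2"
    using assms(4) real_le_rsqrt[of 2 "M i j * M j i"] by (auto simp: t_def power_divide)
  define lam where "lam = - M j i / (2 * t)"
  have "M j i < 0"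
    using assms(3,4) by (cases "M j i = 0") auto
  then have "0 < lam"
    using t(1) unfolding lam_def by (intro divide_pos_pos) auto
  have "t \<noteq> 0"
    using t(1) by simp
  note scaling = symmetrizing_scale[OF t(2) this, folded lam_def]
  have pos: "0 < chebU t n" if "1 \<le> n" for n
    using chebU_ge_index[OF t(1), of n] that by linarith
  have coeffs: "0 < chebU t (2 * k + 1)" "0 < lam * chebU t (2 * k)" "0 < lam * chebU t (2 * k + 2)"
    using assms(5) by (auto intro!: pos mult_pos_pos \<open>0 < lam\<close> simp del: chebU.simps)
  then show "\<exists>a b. a > 0 \<and> b > 0 \<and>
           ((refl M i \<circ> refl M j) ^^ k) (alpha i) = (\<lambda>l. a * alpha i l + b * alpha j l)"
    unfolding rotation_power_alpha[OF assms(1,2) scaling] by blast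
  from coeffs show "\<exists>c d. c > 0 \<and> d > 0 \<and>
           refl M j (((refl M i \<circ> refl M j) ^^ k) (alpha i)) = (\<lambda>l. c * alpha i l + d * alpha j l)"
    unfolding refl_rotation_power_alpha[OF assms(1,2) scaling] by blast
qed

lemma cos_pi_div_pos:
  assumes "3 \<le> m"
  shows "0 < cos (pi / real m)"
proof -
  have "0 < pi / real m"
    using assms by simp
  moreover have "pi / real m \<le> pi / 3"
    using assms by (intro divide_left_mono) auto
  ultimately show ?thesis
    using pi_gt_zero by (intro cos_gt_zero_pi) linarith+
qed

lemma symmetrizing_scale_cos_pi_div:
  fixes b c :: real
  assumes "c \<le> 0" "3 \<le> m" "b * c = 4 * (cos (pi / real m))\<^sup>2"
  defines "lam \<equiv> - c / (2 * cos (pi / real m))"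
  shows "0 < lam" and "- b * lam = 2 * cos (pi / real m)" and "- c = 2 * cos (pi / real m) * lam"
proof -
  have pos: "0 < cos (pi / real m)"
    using cos_pi_div_pos[OF assms(2)] .
  then have "c \<noteq> 0"
    using assms(3) by auto
  then show "0 < lam"
    using assms(1) pos unfolding lam_def by (intro divide_pos_pos) auto
  from pos have "cos (pi / real m) \<noteq> 0"
    by simp
  from symmetrizing_scale[OF assms(3) this]
  show "- b * lam = 2 * cos (pi / real m)" and "- c = 2 * cos (pi / real m) * lam"
    unfolding lam_def .
qed

lemma rotation_orbit_finite_order:
  assumes "M i i = 2" "M j j = 2" "M j i \<le> 0" "i \<noteq> j" "3 \<le> m"
    and "M i j * M j i = 4 * (cos (pi / real m))\<^sup>2" "1 \<le> k" "2 * k < m"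
  shows "\<exists>a b. a \<ge> 0 \<and> b > 0 \<and>
           ((refl M i \<circ> refl M j) ^^ k) (alpha i) = (\<lambda>l. a * alpha i l + b * alpha j l)"
    and "(\<exists>c. ((refl M i \<circ> refl M j) ^^ k) (alpha i) = (\<lambda>l. c * alpha j l))
           \<longleftrightarrow> (odd m \<and> real k = (real m - 1) / 2)"
    and "odd m \<and> real k = (real m - 1) / 2 \<Longrightarrow>
           ((refl M i \<circ> refl M j) ^^ k) (alpha i)
             = (\<lambda>l. (- M j i / (2 * cos (pi / real m))) * alpha j l)"
proof -
  define t where "t = cos (pi / real m)"
  define lam where "lam = - M j i / (2 * t)"
  note scaling = symmetrizing_scale_cos_pi_div[OF assms(3,5,6), folded t_def, folded lam_def]
  note orbit = rotation_power_alpha[OF assms(1,2) scaling(2,3)]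
  have "2 \<le> m"
    using assms(5) by simp
  have a: "0 \<le> chebU t (2 * k + 1)"
    unfolding t_def using \<open>2 \<le> m\<close> assms(8) by (intro chebU_cos_pi_div_nonneg) auto
  have b: "0 < chebU t (2 * k)"
    unfolding t_def using \<open>2 \<le> m\<close> assms(7,8) by (intro chebU_cos_pi_div_pos) auto
  have a_eq_0_iff: "chebU t (2 * k + 1) = 0 \<longleftrightarrow> 2 * k + 1 = m"
    unfolding t_def using \<open>2 \<le> m\<close> assms(8) by (intro chebU_cos_pi_div_eq_0_iff) auto
  have m_odd_iff: "(odd m \<and> real k = (real m - 1) / 2) \<longleftrightarrow> 2 * k + 1 = m"
    by (auto simp: field_simps)
  from b scaling(1) have "0 < lam * chebU t (2 * k)"
    by simp
  with a show "\<exists>a b. a \<ge> 0 \<and> b > 0 \<and>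
           ((refl M i \<circ> refl M j) ^^ k) (alpha i) = (\<lambda>l. a * alpha i l + b * alpha j l)"
    unfolding orbit by blast
  show "(\<exists>c. ((refl M i \<circ> refl M j) ^^ k) (alpha i) = (\<lambda>l. c * alpha j l))
           \<longleftrightarrow> (odd m \<and> real k = (real m - 1) / 2)"
    unfolding orbit two_roots_multiple_of_second_iff[OF assms(4)] a_eq_0_iff m_odd_iff ..
  show "((refl M i \<circ> refl M j) ^^ k) (alpha i)
      = (\<lambda>l. (- M j i / (2 * cos (pi / real m))) * alpha j l)"
    if "odd m \<and> real k = (real m - 1) / 2"
  proof -
    from that have idx: "2 * k + 1 = m" "2 * k = m - 1"
      using m_odd_iff by auto
    have "chebU t (2 * k + 1) = 0"
      using chebU_cos_pi_div_self[OF \<open>2 \<le> m\<close>] unfolding t_def idx(1) .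
    moreover have "chebU t (2 * k) = 1"
      using chebU_cos_pi_div_pred[OF \<open>2 \<le> m\<close>] unfolding t_def idx(2) .
    ultimately show ?thesis
      unfolding orbit by (simp add: lam_def t_def)
  qed
qed

lemma refl_rotation_orbit_finite_order:
  assumes "M i i = 2" "M j j = 2" "M j i \<le> 0" "i \<noteq> j" "3 \<le> m"
    and "M i j * M j i = 4 * (cos (pi / real m))\<^sup>2" "2 * k < m - 1"
  shows "\<exists>a b. a > 0 \<and> b \<ge> 0 \<and>
           refl M j (((refl M i \<circ> refl M j) ^^ k) (alpha i)) = (\<lambda>l. a * alpha i l + b * alpha j l)"
    and "(\<exists>c. refl M j (((refl M i \<circ> refl M j) ^^ k) (alpha i)) = (\<lambda>l. c * alpha i l))
           \<longleftrightarrow> (even m \<and> real k = (real m - 2) / 2)"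
    and "even m \<and> real k = (real m - 2) / 2 \<Longrightarrow>
           refl M j (((refl M i \<circ> refl M j) ^^ k) (alpha i)) = alpha i"
proof -
  define t where "t = cos (pi / real m)"
  define lam where "lam = - M j i / (2 * t)"
  note scaling = symmetrizing_scale_cos_pi_div[OF assms(3,5,6), folded t_def, folded lam_def]
  note orbit = refl_rotation_power_alpha[OF assms(1,2) scaling(2,3)]
  have "2 \<le> m"
    using assms(5) by simp
  have a: "0 < chebU t (2 * k + 1)"
    unfolding t_def using \<open>2 \<le> m\<close> assms(7) by (intro chebU_cos_pi_div_pos) auto
  have b: "0 \<le> chebU t (2 * k + 2)"
    unfolding t_def using \<open>2 \<le> m\<close> assms(7) by (intro chebU_cos_pi_div_nonneg) auto
  have b_eq_0_iff: "chebU t (2 * k + 2) = 0 \<longleftrightarrow> 2 * k + 2 = m"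
    unfolding t_def using \<open>2 \<le> m\<close> assms(7) by (intro chebU_cos_pi_div_eq_0_iff) auto
  have m_even_iff: "(even m \<and> real k = (real m - 2) / 2) \<longleftrightarrow> 2 * k + 2 = m"
    by (auto simp: field_simps)
  from b scaling(1) have "0 \<le> lam * chebU t (2 * k + 2)"
    by simp
  with a show "\<exists>a b. a > 0 \<and> b \<ge> 0 \<and>
           refl M j (((refl M i \<circ> refl M j) ^^ k) (alpha i)) = (\<lambda>l. a * alpha i l + b * alpha j l)"
    unfolding orbit by blast
  show "(\<exists>c. refl M j (((refl M i \<circ> refl M j) ^^ k) (alpha i)) = (\<lambda>l. c * alpha i l))
           \<longleftrightarrow> (even m \<and> real k = (real m - 2) / 2)"
    unfolding orbit two_roots_multiple_of_first_iff[OF assms(4)] m_even_iff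
    using scaling(1) b_eq_0_iff by simp
  show "refl M j (((refl M i \<circ> refl M j) ^^ k) (alpha i)) = alpha i"
    if "even m \<and> real k = (real m - 2) / 2"
  proof -
    from that have idx: "2 * k + 2 = m" "2 * k + 1 = m - 1"
      using m_even_iff by auto
    have "chebU t (2 * k + 2) = 0"
      using chebU_cos_pi_div_self[OF \<open>2 \<le> m\<close>] unfolding t_def idx(1) .
    moreover have "chebU t (2 * k + 1) = 1"
      using chebU_cos_pi_div_pred[OF \<open>2 \<le> m\<close>] unfolding t_def idx(2) .
    ultimately show ?thesis
      unfolding orbit by simp
  qed
qed

theorem lemma4p2:
  fixes M :: "'i::finite \<Rightarrow> 'i \<Rightarrow> real" and i j :: 'i and k :: nat
  assumes "egcm M" and "i \<noteq> j" and "k \<ge> 1"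
  shows
   "(coxm M i j = \<infinity> \<longrightarrow>
       (\<exists>a b. a > 0 \<and> b > 0 \<and>
          ((refl M i \<circ> refl M j) ^^ k) (alpha i) = (\<lambda>l. a * alpha i l + b * alpha j l)) \<and>
       (\<exists>c d. c > 0 \<and> d > 0 \<and>
          refl M j (((refl M i \<circ> refl M j) ^^ k) (alpha i)) = (\<lambda>l. c * alpha i l + d * alpha j l)))
    \<and>
    (\<forall>m::nat. coxm M i j = enat m \<longrightarrow>
       (2 * k < m \<longrightarrow>
          (\<exists>a b. a \<ge> 0 \<and> b > 0 \<and>
             ((refl M i \<circ> refl M j) ^^ k) (alpha i) = (\<lambda>l. a * alpha i l + b * alpha j l)) \<and>
          ((\<exists>c. ((refl M i \<circ> refl M j) ^^ k) (alpha i) = (\<lambda>l. c * alpha j l))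
             \<longleftrightarrow> (odd m \<and> real k = (real m - 1) / 2)) \<and>
          (odd m \<and> real k = (real m - 1) / 2 \<longrightarrow>
             ((refl M i \<circ> refl M j) ^^ k) (alpha i)
               = (\<lambda>l. (- M j i / (2 * cos (pi / real m))) * alpha j l))) \<and>
       (2 * k < m - 1 \<longrightarrow>
          (\<exists>a b. a > 0 \<and> b \<ge> 0 \<and>
             refl M j (((refl M i \<circ> refl M j) ^^ k) (alpha i)) = (\<lambda>l. a * alpha i l + b * alpha j l)) \<and>
          ((\<exists>c. refl M j (((refl M i \<circ> refl M j) ^^ k) (alpha i)) = (\<lambda>l. c * alpha i l))
             \<longleftrightarrow> (even m \<and> real k = (real m - 2) / 2)) \<and>
          (even m \<and> real k = (real m - 2) / 2 \<longrightarrow>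
             refl M j (((refl M i \<circ> refl M j) ^^ k) (alpha i)) = alpha i)))"
proof -
  note diag = egcmD(1)[OF assms(1), of i] egcmD(1)[OF assms(1), of j]
  have "M j i \<le> 0"
    using egcmD(2)[OF assms(1)] assms(2) by simp
  have infinite: "4 \<le> M i j * M j i" if "coxm M i j = \<infinity>"
    using that unfolding coxm_eq_infinity_iff .
  have finite: "M i j * M j i = 4 * (cos (pi / real m))\<^sup>2" if "coxm M i j = enat m" for m
    using coxm_eq_enat_cos(2)[OF assms(1) that] .
  have m_ge_3: "3 \<le> m" if "coxm M i j = enat m" "2 * k < m" for m
    using coxm_eq_enat_cos(1)[OF assms(1) that(1)] that(2) assms(3) by linarith
  have m_ge_3': "3 \<le> m" if "coxm M i j = enat m" "2 * k < m - 1" for m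
    using m_ge_3[OF that(1)] that(2) by linarith
  note infinite_order = rotation_orbit_infinite_order[OF diag \<open>M j i \<le> 0\<close> infinite assms(3)]
  note finite_order =
    rotation_orbit_finite_order[OF diag \<open>M j i \<le> 0\<close> assms(2) m_ge_3 finite assms(3)]
  note refl_finite_order =
    refl_rotation_orbit_finite_order[OF diag \<open>M j i \<le> 0\<close> assms(2) m_ge_3' finite]
  show ?thesis
    by (intro conjI allI impI; rule infinite_order finite_order refl_finite_order; assumption)
qed

end
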